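(* Let $G$ and $H$ be two nontrivial connected graphs. Then $hn_{cc}(G\circ H)=2$.
   Context: All graphs are finite, simple and undirected. For a graph $G$ and $S\subseteq V(G)$, the cycle interval $\langle S\rangle$ consists of the vertices of $S$ together with every vertex $w\in V(G)\setminus S$ such that $G[S\cup\{w\}]$ contains a cycle through $w$. $S$ is cycle convex if $\langle S\rangle=S$. The cycle convex hull $\langle S\rangle_C$ is the smallest cycle convex set containing $S$. A hull set is a set $S$ with $\langle S\rangle_C=V(G)$, and $hn_{cc}(G)$ is the minimum cardinality of a hull set. The lexicographic product $G\circ H$ has vertex set $V(G)\times V(H)$, with $(g_1,h_1)\sim(g_2,h_2)$ iff $g_1\sim g_2$ in $G$, or ($g_1=g_2$ and $h_1\sim h_2$ in $H$). A graph is nontrivial if it has at least two vertices. *)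

theory Defs
  imports Main
begin

definition simple_graph :: "'a set \<Rightarrow> ('a \<Rightarrow> 'a \<Rightarrow> bool) \<Rightarrow> bool" where
  "simple_graph V E \<longleftrightarrow> finite V \<and> (\<forall>u v. E u v \<longrightarrow> u \<in> V \<and> v \<in> V)
     \<and> (\<forall>u v. E u v \<longrightarrow> E v u) \<and> (\<forall>v. \<not> E v v)"

definition connected_graph :: "'a set \<Rightarrow> ('a \<Rightarrow> 'a \<Rightarrow> bool) \<Rightarrow> bool" where
  "connected_graph V E \<longleftrightarrow> V \<noteq> {} \<and> (\<forall>u\<in>V. \<forall>v\<in>V. E\<^sup>*\<^sup>* u v)"

definition is_cycle_in :: "('a \<Rightarrow> 'a \<Rightarrow> bool) \<Rightarrow> 'a set \<Rightarrow> 'a list \<Rightarrow> bool" where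
  "is_cycle_in E T c \<longleftrightarrow> distinct c \<and> length c \<ge> 3 \<and> set c \<subseteq> T
     \<and> (\<forall>i < length c. E (c ! i) (c ! ((i + 1) mod length c)))"

definition cycle_interval :: "'a set \<Rightarrow> ('a \<Rightarrow> 'a \<Rightarrow> bool) \<Rightarrow> 'a set \<Rightarrow> 'a set" where
  "cycle_interval V E S = S \<union> {w \<in> V - S. \<exists>c. is_cycle_in E (S \<union> {w}) c \<and> w \<in> set c}"

definition cycle_convex :: "'a set \<Rightarrow> ('a \<Rightarrow> 'a \<Rightarrow> bool) \<Rightarrow> 'a set \<Rightarrow> bool" where
  "cycle_convex V E S \<longleftrightarrow> S \<subseteq> V \<and> cycle_interval V E S = S"

definition cycle_hull :: "'a set \<Rightarrow> ('a \<Rightarrow> 'a \<Rightarrow> bool) \<Rightarrow> 'a set \<Rightarrow> 'a set" where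
  "cycle_hull V E S = \<Inter> {C. S \<subseteq> C \<and> cycle_convex V E C}"

definition cc_hull_set :: "'a set \<Rightarrow> ('a \<Rightarrow> 'a \<Rightarrow> bool) \<Rightarrow> 'a set \<Rightarrow> bool" where
  "cc_hull_set V E S \<longleftrightarrow> S \<subseteq> V \<and> cycle_hull V E S = V"

definition hull_number_cc :: "'a set \<Rightarrow> ('a \<Rightarrow> 'a \<Rightarrow> bool) \<Rightarrow> nat" where
  "hull_number_cc V E = (LEAST k. \<exists>S. cc_hull_set V E S \<and> card S = k)"

definition lex_vertices :: "'a set \<Rightarrow> 'b set \<Rightarrow> ('a \<times> 'b) set" where
  "lex_vertices VG VH = VG \<times> VH"

definition lex_adj :: "'a set \<Rightarrow> ('a \<Rightarrow> 'a \<Rightarrow> bool) \<Rightarrow> 'b set \<Rightarrow> ('b \<Rightarrow> 'b \<Rightarrow> bool)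
    \<Rightarrow> ('a \<times> 'b) \<Rightarrow> ('a \<times> 'b) \<Rightarrow> bool" where
  "lex_adj VG EG VH EH x y \<longleftrightarrow> fst x \<in> VG \<and> snd x \<in> VH \<and> fst y \<in> VG \<and> snd y \<in> VH \<and>
     (EG (fst x) (fst y) \<or> (fst x = fst y \<and> EH (snd x) (snd y)))"

end

theory Submission
  imports Defs
begin

text \<open>If \<open>h\<^sub>1h\<^sub>2\<close> is an edge of \<open>H\<close> and \<open>g'\<close> is a neighbour of \<open>g\<close> in \<open>G\<close>, then every vertex
  \<open>(g, h)\<close> of \<open>G \<circ> H\<close> closes a triangle with \<open>(g', h\<^sub>1)\<close> and \<open>(g', h\<^sub>2)\<close>. Hence a cycle convex
  set containing two vertices of the fibre over \<open>g'\<close> that are adjacent in \<open>H\<close> contains the whole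
  fibre over \<open>g\<close>, and in particular again such a pair. Starting from an edge \<open>g\<^sub>1g\<^sub>2\<close> of \<open>G\<close>, the
  pair \<open>{(g\<^sub>1, h\<^sub>1), (g\<^sub>1, h\<^sub>2)}\<close> therefore forces the fibre over \<open>g\<^sub>2\<close>, then the one over \<open>g\<^sub>1\<close>, and
  then, along paths of the connected graph \<open>G\<close>, every fibre. Conversely a set of at most one
  vertex is cycle convex, since adding one vertex yields at most two, which carry no cycle.\<close>

lemma is_cycle_in_triangle:
  assumes "E a b" "E b c" "E c a" "distinct [a, b, c]" "{a, b, c} \<subseteq> T"
  shows "is_cycle_in E T [a, b, c]"
proof -
  have "E ([a, b, c] ! i) ([a, b, c] ! ((i + 1) mod 3))" if "i < 3" for i
  proof -
    from that have "i = 0 \<or> i = 1 \<or> i = 2" by auto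
    then show ?thesis using assms by auto
  qed
  then show ?thesis using assms unfolding is_cycle_in_def by auto
qed

lemma cycle_convex_triangle:
  assumes "cycle_convex V E C" "w \<in> V" "a \<in> C" "b \<in> C"
    and "E w a" "E a b" "E b w" "distinct [w, a, b]"
  shows "w \<in> C"
proof (rule ccontr)
  assume "w \<notin> C"
  have "is_cycle_in E (C \<union> {w}) [w, a, b]"
    by (rule is_cycle_in_triangle) (use assms in auto)
  with \<open>w \<notin> C\<close> \<open>w \<in> V\<close> have "w \<in> cycle_interval V E C"
    unfolding cycle_interval_def by auto
  with assms(1) \<open>w \<notin> C\<close> show False unfolding cycle_convex_def by auto
qed

lemma cycle_convex_card_le_1:
  assumes "finite S" "card S \<le> 1" "S \<subseteq> V"
  shows "cycle_convex V E S"
proof -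
  have "\<not> is_cycle_in E (S \<union> {w}) c" for w c
  proof
    assume "is_cycle_in E (S \<union> {w}) c"
    then have c: "distinct c" "length c \<ge> 3" "set c \<subseteq> S \<union> {w}"
      unfolding is_cycle_in_def by auto
    have "length c = card (set c)" using distinct_card[OF c(1)] by simp
    also have "\<dots> \<le> card (S \<union> {w})" using c(3) assms(1) by (simp add: card_mono)
    also have "\<dots> \<le> card S + 1" using assms(1) by (simp add: card_insert_le_m1)
    finally show False using c(2) assms(2) by linarith
  qed
  then show ?thesis unfolding cycle_convex_def cycle_interval_def using assms by auto
qed

lemma cycle_convex_vertices: "cycle_convex V E V"
  unfolding cycle_convex_def cycle_interval_def by auto

lemma cycle_hull_least: "S \<subseteq> C \<Longrightarrow> cycle_convex V E C \<Longrightarrow> cycle_hull V E S \<subseteq> C"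
  unfolding cycle_hull_def by auto

lemma cc_hull_setI:
  assumes "S \<subseteq> V" and "\<And>C. S \<subseteq> C \<Longrightarrow> cycle_convex V E C \<Longrightarrow> V \<subseteq> C"
  shows "cc_hull_set V E S"
proof -
  have "cycle_hull V E S \<subseteq> V" using assms(1) cycle_convex_vertices by (rule cycle_hull_least)
  moreover have "V \<subseteq> cycle_hull V E S" unfolding cycle_hull_def using assms(2) by blast
  ultimately show ?thesis unfolding cc_hull_set_def using assms(1) by blast
qed

lemma cc_hull_set_card_ge_2:
  assumes "cc_hull_set V E S" "card V \<ge> 2"
  shows "card S \<ge> 2"
proof (rule ccontr)
  assume "\<not> card S \<ge> 2"
  have "finite V" using assms(2) card.infinite by fastforce
  have "S \<subseteq> V" "cycle_hull V E S = V" using assms(1) unfolding cc_hull_set_def by auto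
  with \<open>finite V\<close> \<open>\<not> card S \<ge> 2\<close> have "cycle_convex V E S"
    by (intro cycle_convex_card_le_1) (auto intro: finite_subset)
  then have "cycle_hull V E S \<subseteq> S" by (rule cycle_hull_least[OF order_refl])
  with \<open>cycle_hull V E S = V\<close> \<open>S \<subseteq> V\<close> have "S = V" by blast
  with assms(2) \<open>\<not> card S \<ge> 2\<close> show False by simp
qed

lemma hull_number_ccI:
  assumes "cc_hull_set V E S" and "\<And>T. cc_hull_set V E T \<Longrightarrow> card S \<le> card T"
  shows "hull_number_cc V E = card S"
  unfolding hull_number_cc_def using assms by (intro Least_equality) auto

lemma connected_graph_ex_edge:
  assumes "connected_graph V E" "card V \<ge> 2"
  shows "\<exists>u v. E u v"
proof -
  obtain u v where "u \<in> V" "v \<in> V" "u \<noteq> v"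
    using assms(2)
    by (metis card_le_Suc0_iff_eq card.infinite not_less_eq_eq numeral_2_eq_2 zero_less_numeral not_le)
  with assms(1) have "E\<^sup>*\<^sup>* u v" unfolding connected_graph_def by auto
  then show ?thesis using \<open>u \<noteq> v\<close> by (cases rule: converse_rtranclpE) auto
qed

lemma lex_fibre_subset_cycle_convex:
  assumes G: "simple_graph VG EG" and H: "simple_graph VH EH"
    and C: "cycle_convex (lex_vertices VG VH) (lex_adj VG EG VH EH) C"
    and "EG g g'" "EH h\<^sub>1 h\<^sub>2" "(g', h\<^sub>1) \<in> C" "(g', h\<^sub>2) \<in> C"
  shows "{g} \<times> VH \<subseteq> C"
proof
  fix x assume "x \<in> {g} \<times> VH"
  then obtain h where x: "x = (g, h)" "h \<in> VH" by auto
  from G \<open>EG g g'\<close> have "g \<in> VG" "g' \<in> VG" "g \<noteq> g'" "EG g' g"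
    unfolding simple_graph_def by metis+
  moreover from H \<open>EH h\<^sub>1 h\<^sub>2\<close> have "h\<^sub>1 \<in> VH" "h\<^sub>2 \<in> VH" "h\<^sub>1 \<noteq> h\<^sub>2"
    unfolding simple_graph_def by metis+
  ultimately show "x \<in> C" unfolding x(1)
    using assms x(2) by (intro cycle_convex_triangle[OF C _ \<open>(g', h\<^sub>1) \<in> C\<close> \<open>(g', h\<^sub>2) \<in> C\<close>])
      (auto simp: lex_vertices_def lex_adj_def)
qed

lemma lex_vertices_subset_cycle_convex:
  assumes G: "simple_graph VG EG" "connected_graph VG EG" and H: "simple_graph VH EH"
    and C: "cycle_convex (lex_vertices VG VH) (lex_adj VG EG VH EH) C"
    and "EH h\<^sub>1 h\<^sub>2" "g\<^sub>0 \<in> VG" and fibre: "{g\<^sub>0} \<times> VH \<subseteq> C"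
  shows "lex_vertices VG VH \<subseteq> C"
proof
  fix x assume "x \<in> lex_vertices VG VH"
  then obtain g h where x: "x = (g, h)" "g \<in> VG" "h \<in> VH" unfolding lex_vertices_def by auto
  have "h\<^sub>1 \<in> VH" "h\<^sub>2 \<in> VH" using H \<open>EH h\<^sub>1 h\<^sub>2\<close> unfolding simple_graph_def by auto
  from G(2) \<open>g\<^sub>0 \<in> VG\<close> \<open>g \<in> VG\<close> have "EG\<^sup>*\<^sup>* g\<^sub>0 g" unfolding connected_graph_def by auto
  then have "{g} \<times> VH \<subseteq> C"
  proof (induction rule: rtranclp_induct)
    case base
    show ?case by (rule fibre)
  next
    case (step g' g)
    from \<open>EG g' g\<close> G(1) have "EG g g'" unfolding simple_graph_def by blast
    with step.IH \<open>h\<^sub>1 \<in> VH\<close> \<open>h\<^sub>2 \<in> VH\<close> show ?case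
      by (intro lex_fibre_subset_cycle_convex[OF G(1) H C _ \<open>EH h\<^sub>1 h\<^sub>2\<close>]) auto
  qed
  with x show "x \<in> C" by auto
qed

lemma lex_cc_hull_set_edge_pair:
  assumes G: "simple_graph VG EG" "connected_graph VG EG" and H: "simple_graph VH EH"
    and "EG g\<^sub>1 g\<^sub>2" "EH h\<^sub>1 h\<^sub>2"
  shows "cc_hull_set (lex_vertices VG VH) (lex_adj VG EG VH EH) {(g\<^sub>1, h\<^sub>1), (g\<^sub>1, h\<^sub>2)}"
proof (rule cc_hull_setI)
  have "g\<^sub>1 \<in> VG" "g\<^sub>2 \<in> VG" "EG g\<^sub>2 g\<^sub>1" using G(1) \<open>EG g\<^sub>1 g\<^sub>2\<close> unfolding simple_graph_def by auto
  have "h\<^sub>1 \<in> VH" "h\<^sub>2 \<in> VH" using H \<open>EH h\<^sub>1 h\<^sub>2\<close> unfolding simple_graph_def by auto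
  then show "{(g\<^sub>1, h\<^sub>1), (g\<^sub>1, h\<^sub>2)} \<subseteq> lex_vertices VG VH"
    using \<open>g\<^sub>1 \<in> VG\<close> unfolding lex_vertices_def by auto
  fix C
  assume S: "{(g\<^sub>1, h\<^sub>1), (g\<^sub>1, h\<^sub>2)} \<subseteq> C"
    and C: "cycle_convex (lex_vertices VG VH) (lex_adj VG EG VH EH) C"
  have "{g\<^sub>2} \<times> VH \<subseteq> C"
    using S by (intro lex_fibre_subset_cycle_convex[OF G(1) H C \<open>EG g\<^sub>2 g\<^sub>1\<close> \<open>EH h\<^sub>1 h\<^sub>2\<close>]) auto
  then have "{g\<^sub>1} \<times> VH \<subseteq> C"
    using \<open>h\<^sub>1 \<in> VH\<close> \<open>h\<^sub>2 \<in> VH\<close>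
    by (intro lex_fibre_subset_cycle_convex[OF G(1) H C \<open>EG g\<^sub>1 g\<^sub>2\<close> \<open>EH h\<^sub>1 h\<^sub>2\<close>]) auto
  then show "lex_vertices VG VH \<subseteq> C"
    by (rule lex_vertices_subset_cycle_convex[OF G H C \<open>EH h\<^sub>1 h\<^sub>2\<close> \<open>g\<^sub>1 \<in> VG\<close>])
qed

theorem mainTheorem2:
  fixes VG :: "'a set" and EG :: "'a \<Rightarrow> 'a \<Rightarrow> bool"
    and VH :: "'b set" and EH :: "'b \<Rightarrow> 'b \<Rightarrow> bool"
  assumes "simple_graph VG EG" and "connected_graph VG EG" and "card VG \<ge> 2"
    and "simple_graph VH EH" and "connected_graph VH EH" and "card VH \<ge> 2"
  shows "hull_number_cc (lex_vertices VG VH) (lex_adj VG EG VH EH) = 2"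
proof -
  obtain g\<^sub>1 g\<^sub>2 where "EG g\<^sub>1 g\<^sub>2" using connected_graph_ex_edge[OF assms(2,3)] by blast
  obtain h\<^sub>1 h\<^sub>2 where "EH h\<^sub>1 h\<^sub>2" using connected_graph_ex_edge[OF assms(5,6)] by blast
  let ?S = "{(g\<^sub>1, h\<^sub>1), (g\<^sub>1, h\<^sub>2)}"
  have hull: "cc_hull_set (lex_vertices VG VH) (lex_adj VG EG VH EH) ?S"
    using assms(1,2,4) \<open>EG g\<^sub>1 g\<^sub>2\<close> \<open>EH h\<^sub>1 h\<^sub>2\<close> by (rule lex_cc_hull_set_edge_pair)
  have "h\<^sub>1 \<noteq> h\<^sub>2" using assms(4) \<open>EH h\<^sub>1 h\<^sub>2\<close> unfolding simple_graph_def by auto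
  then have "card ?S = 2" by simp
  have "card (lex_vertices VG VH) \<ge> 2"
    unfolding lex_vertices_def card_cartesian_product using mult_le_mono[OF assms(3,6)] by simp
  then have "card ?S \<le> card T" if "cc_hull_set (lex_vertices VG VH) (lex_adj VG EG VH EH) T" for T
    using cc_hull_set_card_ge_2[OF that] \<open>card ?S = 2\<close> by simp
  with hull \<open>card ?S = 2\<close> show ?thesis by (metis hull_number_ccI)
qed

end
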